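(* Let $\mathbb{F}\in\{\mathbb{R},\mathbb{C}\}$, $M>N$, and $0\le k\le M$. If $\Phi\in\mathcal{P}(M,N)$ and $\Psi\in\mathcal{P}(M,M-N)$ are Naimark complements, then $\Phi$ maximizes $NE_k$ over $\mathcal{P}(M,N)$ if and only if $\Psi$ maximizes $NE_{M-k}$ over $\mathcal{P}(M,M-N)$.
   Context: $\mathcal{P}(M,n)$ is the set of Parseval frames for $\mathbb{F}^n$ with $M$ vectors, i.e. families $\{\varphi_i\}_{i=1}^M\subseteq\mathbb{F}^n$ whose $n\times M$ matrix $\Phi$ satisfies $\Phi\Phi^*=I$. $\Phi\in\mathcal{P}(M,N)$ and $\Psi\in\mathcal{P}(M,M-N)$ are Naimark complements if $\Psi^*\Psi=I-\Phi^*\Phi$. For $K\subseteq[M]$, $\Phi_K$ is the submatrix of columns indexed by $K$. The nuclear norm $\|F\|_*$ is the sum of the singular values of $F$, and $NE_k(\Phi)=\sum_{|K|=k}\|\Phi_K\|_*$. *)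

theory Defs
  imports "Jordan_Normal_Form.Schur_Decomposition" "Jordan_Normal_Form.DL_Submatrix"
    "Jordan_Normal_Form.Char_Poly" "HOL-Computational_Algebra.Fundamental_Theorem_Algebra"
begin

text \<open>Matrices are Jordan_Normal_Form matrices; the frame vectors are the columns,
  indexed by 0..M-1.  The field F is real or complex; the scalar type is 'a and
  emb embeds it into the complex numbers (of_real for F = R, id for F = C),
  which is only used to compute singular values.\<close>

definition singular_values :: "complex mat \<Rightarrow> real multiset" where
  "singular_values F = image_mset (\<lambda>z. sqrt (Re z)) (proots (char_poly (mat_adjoint F * F)))"

definition nuclear_norm :: "complex mat \<Rightarrow> real" where
  "nuclear_norm F = sum_mset (singular_values F)"

definition parseval_frames :: "nat \<Rightarrow> nat \<Rightarrow> 'a::conjugatable_field mat set" where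
  "parseval_frames M n = {\<Phi>. \<Phi> \<in> carrier_mat n M \<and> \<Phi> * mat_adjoint \<Phi> = 1\<^sub>m n}"

definition naimark_complements :: "'a::conjugatable_field mat \<Rightarrow> 'a mat \<Rightarrow> bool" where
  "naimark_complements \<Phi> \<Psi> \<longleftrightarrow>
     mat_adjoint \<Psi> * \<Psi> = 1\<^sub>m (dim_col \<Phi>) - mat_adjoint \<Phi> * \<Phi>"

definition col_submatrix :: "'a mat \<Rightarrow> nat set \<Rightarrow> 'a mat" where
  "col_submatrix \<Phi> K = submatrix \<Phi> UNIV K"

definition NE :: "('a::conjugatable_field \<Rightarrow> complex) \<Rightarrow> nat \<Rightarrow> 'a mat \<Rightarrow> real" where
  "NE emb k \<Phi> = (\<Sum>K\<in>{K. K \<subseteq> {..<dim_col \<Phi>} \<and> card K = k}.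
      nuclear_norm (map_mat emb (col_submatrix \<Phi> K)))"

definition maximizes_NE ::
  "('a::conjugatable_field \<Rightarrow> complex) \<Rightarrow> nat \<Rightarrow> nat \<Rightarrow> nat \<Rightarrow> 'a mat \<Rightarrow> bool" where
  "maximizes_NE emb k M n \<Phi> \<longleftrightarrow>
     \<Phi> \<in> parseval_frames M n \<and> (\<forall>\<Phi>'\<in>parseval_frames M n. NE emb k \<Phi>' \<le> NE emb k \<Phi>)"

end

theory Submission
  imports Defs
begin

(* For a column set K write Q = Psi_K, W = Psi_(complement of K) and F = Phi_K.  The Naimark
   relation Psi^* Psi = I - Phi^* Phi gives Q^* Q = I - F^* F, and as Psi has orthonormal rows,
   W W^* = I - Q Q^*.  Since Q Q^* and Q^* Q have the same eigenvalues apart from zeros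
   (Sylvester's determinant identity), the singular values of W are those of F up to ones and
   zeros:  ||W||_* + |K| = ||F||_* + (M - N).  Summing over |K| = k gives
   NE_(M-k)(Psi) = NE_k(Phi) + binomial(M, k) (M - N - k) for every pair of Naimark complements.
   Every Parseval frame has a Naimark complement (extend its rows to an orthonormal basis), so
   NE_k and NE_(M-k) differ by a constant along the Naimark correspondence and have
   corresponding maximizers.  Real frames are handled by embedding them into complex matrices. *)

section \<open>Adjoints and Sylvester's determinant identity\<close>

lemma dim_mat_adjoint [simp]:
  "dim_row (mat_adjoint A) = dim_col A" "dim_col (mat_adjoint A) = dim_row A"
  by (simp_all add: mat_adjoint_def)

lemma mat_adjoint_carrier [simp, intro]: "A \<in> carrier_mat n m \<Longrightarrow> mat_adjoint A \<in> carrier_mat m n"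
  by auto

lemma index_mat_adjoint [simp]:
  "i < dim_col A \<Longrightarrow> j < dim_row A \<Longrightarrow> mat_adjoint A $$ (i, j) = conjugate (A $$ (j, i))"
  unfolding mat_adjoint_def by (subst mat_of_rows_index) auto

lemma index_mult_mat_adjoint:
  assumes "i < dim_row A" "j < dim_row B" "dim_col B = dim_col A"
  shows "(A * mat_adjoint B) $$ (i, j) = (\<Sum>l<dim_col A. A $$ (i, l) * conjugate (B $$ (j, l)))"
  using assms by (simp add: scalar_prod_def lessThan_atLeast0)

lemma index_mat_adjoint_mult:
  assumes "i < dim_col A" "j < dim_col B" "dim_row B = dim_row A"
  shows "(mat_adjoint A * B) $$ (i, j) = (\<Sum>l<dim_row A. conjugate (A $$ (l, i)) * B $$ (l, j))"
  using assms by (simp add: scalar_prod_def lessThan_atLeast0)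

lemma mat_eq_minus_of_add_eq:
  fixes A B :: "'a::ab_group_add mat"
  assumes "A \<in> carrier_mat n m" "B \<in> carrier_mat n m" "A + B = C"
  shows "B = C - A"
  using assms by (auto intro!: eq_matI)

lemma mat_adjoint_map_mat:
  assumes "\<And>a. f (conjugate a) = conjugate (f a)"
  shows "mat_adjoint (map_mat f A) = map_mat f (mat_adjoint A)"
  by (rule eq_matI) (simp_all add: assms)

lemma char_poly_eq_det:
  fixes A :: "'a::comm_ring_1 mat"
  assumes "A \<in> carrier_mat n n"
  shows "char_poly A = det ([:0, 1:] \<cdot>\<^sub>m 1\<^sub>m n - map_mat (\<lambda>a. [:a:]) A)"
proof -
  have "char_poly_matrix A = [:0, 1:] \<cdot>\<^sub>m 1\<^sub>m n - map_mat (\<lambda>a. [:a:]) A"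
    by (rule eq_matI) (use assms in \<open>auto simp: char_poly_matrix_def\<close>)
  then show ?thesis by (simp add: char_poly_def)
qed

lemma char_poly_mult_commute:
  fixes A B :: "'a::idom mat"
  assumes A: "A \<in> carrier_mat n m" and B: "B \<in> carrier_mat m n"
  shows "[:0, 1:] ^ m * char_poly (A * B) = [:0, 1:] ^ n * char_poly (B * A)"
proof -
  let ?x = "[:0, 1:] :: 'a poly"
  define A' B' where "A' = map_mat (\<lambda>a. [:a:]) A" and "B' = map_mat (\<lambda>a. [:a:]) B"
  have A': "A' \<in> carrier_mat n m" and B': "B' \<in> carrier_mat m n"
    using A B by (auto simp: A'_def B'_def)
  have AB: "char_poly (A * B) = det (?x \<cdot>\<^sub>m 1\<^sub>m n - A' * B')"
    using A B by (simp add: char_poly_eq_det[of _ n] map_poly_mult A'_def B'_def)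
  have BA: "char_poly (B * A) = det (?x \<cdot>\<^sub>m 1\<^sub>m m - B' * A')"
    using A B by (simp add: char_poly_eq_det[of _ m] map_poly_mult A'_def B'_def)
  define P where "P = four_block_mat (?x \<cdot>\<^sub>m 1\<^sub>m n) A' B' (1\<^sub>m m)"
  have P: "P \<in> carrier_mat (n + m) (n + m)" using A' B' by (simp add: P_def)
  \<comment> \<open>Multiplying \<open>P\<close> by two block-triangular matrices of determinant \<open>x^m\<close> gives
    block-triangular matrices with diagonal blocks \<open>x I - A B\<close> and \<open>x I - B A\<close>.\<close>
  define L R where "L = four_block_mat (1\<^sub>m n) (- A') (0\<^sub>m m n) (?x \<cdot>\<^sub>m 1\<^sub>m m)"
    and "R = four_block_mat (1\<^sub>m n) (0\<^sub>m n m) (- B') (?x \<cdot>\<^sub>m 1\<^sub>m m)"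
  have L: "L \<in> carrier_mat (n + m) (n + m)" and R: "R \<in> carrier_mat (n + m) (n + m)"
    using A' B' by (auto simp: L_def R_def)
  have LP: "L * P = four_block_mat (?x \<cdot>\<^sub>m 1\<^sub>m n - A' * B') (0\<^sub>m n m) (?x \<cdot>\<^sub>m B') (?x \<cdot>\<^sub>m 1\<^sub>m m)"
    unfolding L_def P_def using A' B' by (subst mult_four_block_mat[of _ n n _ m _ m]) auto
  have "det (L * P) = char_poly (A * B) * ?x ^ m"
    unfolding LP using A' B' AB by (subst det_four_block_mat_upper_right_zero[of _ n _ m]) auto
  moreover have "det L = ?x ^ m"
    unfolding L_def using A' by (subst det_four_block_mat_lower_left_zero[of _ n _ m]) auto
  ultimately have "?x ^ m * det P = char_poly (A * B) * ?x ^ m"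
    using det_mult[OF L P] by simp
  have RP: "R * P = four_block_mat (?x \<cdot>\<^sub>m 1\<^sub>m n) A' (0\<^sub>m m n) (?x \<cdot>\<^sub>m 1\<^sub>m m - B' * A')"
    unfolding R_def P_def using A' B' by (subst mult_four_block_mat[of _ n n _ m _ m]) auto
  have "det (R * P) = ?x ^ n * char_poly (B * A)"
    unfolding RP using A' B' BA by (subst det_four_block_mat_lower_left_zero[of _ n _ m]) auto
  moreover have "det R = ?x ^ m"
    unfolding R_def using B' by (subst det_four_block_mat_upper_right_zero[of _ n _ m]) auto
  ultimately have "?x ^ m * det P = ?x ^ n * char_poly (B * A)"
    using det_mult[OF R P] by simp
  with \<open>?x ^ m * det P = char_poly (A * B) * ?x ^ m\<close> show ?thesis by (simp add: mult.commute)
qed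

lemma proots_x_power_mult:
  fixes p :: "'a::idom poly"
  assumes "p \<noteq> 0"
  shows "proots ([:0, 1:] ^ n * p) = replicate_mset n 0 + proots p"
  using assms by (simp add: proots_mult proots_power)

lemma proots_char_poly_mult_commute:
  fixes A B :: "'a::idom mat"
  assumes A: "A \<in> carrier_mat n m" and B: "B \<in> carrier_mat m n"
  shows "replicate_mset m 0 + proots (char_poly (A * B)) = replicate_mset n 0 + proots (char_poly (B * A))"
proof -
  have "char_poly (A * B) \<noteq> 0" and "char_poly (B * A) \<noteq> 0"
    using degree_monic_char_poly[of "A * B" n] degree_monic_char_poly[of "B * A" m] A B by auto
  then show ?thesis
    using arg_cong[OF char_poly_mult_commute[OF A B], of proots] by (simp add: proots_x_power_mult)
qed

lemma proots_prod_linear_factors: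
  fixes as :: "'a::idom list"
  shows "proots (\<Prod>a\<leftarrow>as. [:- a, 1:]) = mset as"
proof (induction as)
  case (Cons a as)
  have "(\<Prod>b\<leftarrow>as. [:- b, 1:]) \<noteq> 0" by (auto simp: prod_list_zero_iff)
  with Cons show ?case by (simp add: proots_mult del: mult_pCons_left)
qed simp

lemma proots_char_poly_one_minus:
  fixes X :: "complex mat"
  assumes X: "X \<in> carrier_mat n n"
  shows "proots (char_poly (1\<^sub>m n - X)) = image_mset (\<lambda>z. 1 - z) (proots (char_poly X))"
proof -
  obtain as where "char_poly X = (\<Prod>a\<leftarrow>as. [:- a, 1:])"
    using char_poly_factorized[OF X] by auto
  then obtain T where T: "T \<in> carrier_mat n n" "upper_triangular T" "similar_mat X T"
    using schur_upper_triangular[OF X] by blast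
  then obtain P Q where PQ: "P \<in> carrier_mat n n" "Q \<in> carrier_mat n n"
      "P * Q = 1\<^sub>m n" "Q * P = 1\<^sub>m n" "X = P * T * Q"
    using similar_matD[OF T(3)] X by auto
  have "P * (1\<^sub>m n - T) * Q = (P - P * T) * Q"
    using mult_minus_distrib_mat[OF PQ(1) one_carrier_mat T(1)] PQ(1) by simp
  also have "\<dots> = 1\<^sub>m n - X"
    using PQ T(1) by (simp add: minus_mult_distrib_mat[of _ n n])
  finally have "P * (1\<^sub>m n - T) * Q = 1\<^sub>m n - X" .
  then have "similar_mat (1\<^sub>m n - X) (1\<^sub>m n - T)"
    using PQ T(1) by (intro similar_matI[of _ _ P Q n]) auto
  moreover have "upper_triangular (1\<^sub>m n - T)"
    using T(1,2) by (auto simp: upper_triangular_def)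
  ultimately have char_poly_one_minus: "char_poly (1\<^sub>m n - X) = (\<Prod>a\<leftarrow>diag_mat (1\<^sub>m n - T). [:- a, 1:])"
    using minus_carrier_mat[OF T(1)] char_poly_upper_triangular[of "1\<^sub>m n - T" n]
    by (simp add: char_poly_similar)
  have char_poly_X: "char_poly X = (\<Prod>a\<leftarrow>diag_mat T. [:- a, 1:])"
    using T by (simp add: char_poly_similar char_poly_upper_triangular[of _ n])
  have diag: "diag_mat (1\<^sub>m n - T) = map (\<lambda>z. 1 - z) (diag_mat T)"
    using T(1) by (auto simp: diag_mat_def)
  show ?thesis
    unfolding char_poly_one_minus char_poly_X diag proots_prod_linear_factors by simp
qed

section \<open>Nuclear norms of column submatrices of Naimark complements\<close>

definition sum_sqrt_Re :: "complex multiset \<Rightarrow> real" where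
  "sum_sqrt_Re S = (\<Sum>z\<in>#S. sqrt (Re z))"

lemma sum_sqrt_Re_union [simp]: "sum_sqrt_Re (S + T) = sum_sqrt_Re S + sum_sqrt_Re T"
  by (simp add: sum_sqrt_Re_def)

lemma sum_sqrt_Re_replicate [simp]: "sum_sqrt_Re (replicate_mset n c) = real n * sqrt (Re c)"
  by (simp add: sum_sqrt_Re_def)

lemma nuclear_norm_eq_sum_sqrt_Re:
  "nuclear_norm F = sum_sqrt_Re (proots (char_poly (mat_adjoint F * F)))"
  by (simp add: nuclear_norm_def singular_values_def sum_sqrt_Re_def)

lemma nuclear_norm_eq_sum_sqrt_Re_mult_adjoint:
  assumes "F \<in> carrier_mat n m"
  shows "nuclear_norm F = sum_sqrt_Re (proots (char_poly (F * mat_adjoint F)))"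
  using arg_cong[OF proots_char_poly_mult_commute[OF mat_adjoint_carrier[OF assms] assms], of sum_sqrt_Re]
  by (simp add: nuclear_norm_eq_sum_sqrt_Re)

lemma sum_pick:
  assumes "finite S"
  shows "(\<Sum>j<card S. f (pick S j)) = sum f S"
proof -
  have inj: "inj_on (pick S) {..<card S}"
    by (rule inj_onI) (metis lessThan_iff nat_neq_iff pick_mono_le)
  have "pick S ` {..<card S} \<subseteq> S"
    using pick_in_set_le by auto
  moreover have "card (pick S ` {..<card S}) = card S"
    using card_image[OF inj] by simp
  ultimately have "pick S ` {..<card S} = S"
    using assms by (simp add: card_subset_eq)
  then show ?thesis
    using sum.reindex[OF inj, of f] by simp
qed

lemma pick_less: "K \<subseteq> {..<M} \<Longrightarrow> j < card K \<Longrightarrow> pick K j < M"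
  using pick_in_set_le by blast

lemma pick_eq_iff: "i < card K \<Longrightarrow> j < card K \<Longrightarrow> pick K i = pick K j \<longleftrightarrow> i = j"
  by (metis nat_neq_iff pick_mono_le)

lemma col_submatrix_eq_mat:
  assumes "A \<in> carrier_mat n M" and "K \<subseteq> {..<M}"
  shows "col_submatrix A K = mat n (card K) (\<lambda>(i, j). A $$ (i, pick K j))"
proof -
  have "{j. j < dim_col A \<and> j \<in> K} = K" and "{i. i < dim_row A} = {..<n}"
    using assms by auto
  then show ?thesis
    using assms by (simp add: col_submatrix_def submatrix_def pick_UNIV)
qed

lemma dim_row_col_submatrix [simp]: "dim_row (col_submatrix A K) = dim_row A"
  by (simp add: col_submatrix_def dim_submatrix)

lemma col_submatrix_carrier:
  "A \<in> carrier_mat n M \<Longrightarrow> K \<subseteq> {..<M} \<Longrightarrow> col_submatrix A K \<in> carrier_mat n (card K)"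
  by (simp add: col_submatrix_eq_mat)

lemma index_adjoint_mult_col_submatrix:
  assumes "A \<in> carrier_mat n M" "B \<in> carrier_mat n M" "K \<subseteq> {..<M}" "i < card K" "j < card K"
  shows "(mat_adjoint (col_submatrix A K) * col_submatrix B K) $$ (i, j)
       = (mat_adjoint A * B) $$ (pick K i, pick K j)"
  using assms pick_less[OF assms(3)]
  by (simp add: col_submatrix_eq_mat index_mat_adjoint_mult del: index_mult_mat(1))

lemma col_submatrix_mult_adjoint_split:
  assumes A: "A \<in> carrier_mat n M" and K: "K \<subseteq> {..<M}"
  shows "col_submatrix A K * mat_adjoint (col_submatrix A K)
       + col_submatrix A ({..<M} - K) * mat_adjoint (col_submatrix A ({..<M} - K))
       = A * mat_adjoint A"
proof (rule eq_matI)
  fix i j assume "i < dim_row (A * mat_adjoint A)" "j < dim_col (A * mat_adjoint A)"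
  then have i: "i < n" and j: "j < n" using A by auto
  define g where "g l = A $$ (i, l) * conjugate (A $$ (j, l))" for l
  have part: "(col_submatrix A S * mat_adjoint (col_submatrix A S)) $$ (i, j) = sum g S"
    if S: "S \<subseteq> {..<M}" for S
  proof -
    have "finite S" using S finite_subset by blast
    then show ?thesis
      using A S i j pick_less[OF S] sum_pick[of S g]
      by (simp add: col_submatrix_eq_mat index_mult_mat_adjoint g_def del: index_mult_mat(1))
  qed
  have "sum g K + sum g ({..<M} - K) = sum g {..<M}"
    using K by (simp add: sum.subset_diff[of K "{..<M}"])
  then show "(col_submatrix A K * mat_adjoint (col_submatrix A K)
       + col_submatrix A ({..<M} - K) * mat_adjoint (col_submatrix A ({..<M} - K))) $$ (i, j)
       = (A * mat_adjoint A) $$ (i, j)"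
    using A K i j part[of K] part[of "{..<M} - K"]
    by (simp add: index_mult_mat_adjoint g_def del: index_mult_mat(1))
qed (use A K in \<open>auto simp: col_submatrix_eq_mat\<close>)

lemma nuclear_norm_Naimark_col_submatrix:
  fixes \<Phi> \<Psi> :: "complex mat"
  assumes \<Phi>: "\<Phi> \<in> carrier_mat N M" and \<Psi>: "\<Psi> \<in> carrier_mat r M"
    and \<Psi>_rows: "\<Psi> * mat_adjoint \<Psi> = 1\<^sub>m r"
    and Naimark: "mat_adjoint \<Psi> * \<Psi> = 1\<^sub>m M - mat_adjoint \<Phi> * \<Phi>"
    and K: "K \<subseteq> {..<M}"
  shows "nuclear_norm (col_submatrix \<Psi> ({..<M} - K)) + card K
       = nuclear_norm (col_submatrix \<Phi> K) + r"
proof -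
  define F Q W where "F = col_submatrix \<Phi> K" and "Q = col_submatrix \<Psi> K"
    and "W = col_submatrix \<Psi> ({..<M} - K)"
  have F: "F \<in> carrier_mat N (card K)" and Q: "Q \<in> carrier_mat r (card K)"
    and W: "W \<in> carrier_mat r (card ({..<M} - K))"
    using \<Phi> \<Psi> K by (auto simp: F_def Q_def W_def col_submatrix_carrier)
  have QQ: "mat_adjoint Q * Q = 1\<^sub>m (card K) - mat_adjoint F * F"
  proof (rule eq_matI)
    fix i j assume "i < dim_row (1\<^sub>m (card K) - mat_adjoint F * F)"
      and "j < dim_col (1\<^sub>m (card K) - mat_adjoint F * F)"
    then have i: "i < card K" and j: "j < card K" using F by auto
    have "(mat_adjoint Q * Q) $$ (i, j) = (1\<^sub>m M - mat_adjoint \<Phi> * \<Phi>) $$ (pick K i, pick K j)"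
      using index_adjoint_mult_col_submatrix[OF \<Psi> \<Psi> K i j] Naimark by (simp add: Q_def)
    also have "\<dots> = (1\<^sub>m (card K) - mat_adjoint F * F) $$ (i, j)"
      using index_adjoint_mult_col_submatrix[OF \<Phi> \<Phi> K i j] pick_less[OF K] i j pick_eq_iff[OF i j] \<Phi> F
      by (simp add: F_def)
    finally show "(mat_adjoint Q * Q) $$ (i, j) = (1\<^sub>m (card K) - mat_adjoint F * F) $$ (i, j)" .
  qed (use F Q in auto)
  have WW: "W * mat_adjoint W = 1\<^sub>m r - Q * mat_adjoint Q"
    using col_submatrix_mult_adjoint_split[OF \<Psi> K] \<Psi>_rows Q W
    by (intro mat_eq_minus_of_add_eq[of _ r r]) (auto simp: Q_def W_def)
  have "replicate_mset (card K) 0 + proots (char_poly (Q * mat_adjoint Q))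
      = replicate_mset r 0 + proots (char_poly (mat_adjoint Q * Q))"
    by (rule proots_char_poly_mult_commute[OF Q mat_adjoint_carrier[OF Q]])
  \<comment> \<open>Apply \<open>z \<mapsto> 1 - z\<close>, which is an involution, to both sides.\<close>
  from arg_cong[OF this, of "image_mset (\<lambda>z. 1 - z)"]
  have "replicate_mset (card K) 1 + proots (char_poly (W * mat_adjoint W))
      = replicate_mset r 1 + proots (char_poly (mat_adjoint F * F))"
    unfolding WW QQ using Q F
      proots_char_poly_one_minus[OF mult_carrier_mat[OF Q mat_adjoint_carrier[OF Q]]]
      proots_char_poly_one_minus[OF mult_carrier_mat[OF mat_adjoint_carrier[OF F] F]]
    by (simp add: multiset.map_comp o_def)
  from arg_cong[OF this, of sum_sqrt_Re] show ?thesis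
    using nuclear_norm_eq_sum_sqrt_Re_mult_adjoint[OF W] nuclear_norm_eq_sum_sqrt_Re[of F]
    unfolding F_def W_def by simp
qed

lemma sum_subsets_complement:
  assumes "k \<le> M"
  shows "(\<Sum>K\<in>{K. K \<subseteq> {..<M} \<and> card K = M - k}. f K)
       = (\<Sum>K\<in>{K. K \<subseteq> {..<M} \<and> card K = k}. f ({..<M} - K))"
proof (rule sum.reindex_bij_witness[of _ "\<lambda>K. {..<M} - K" "\<lambda>K. {..<M} - K"])
  fix K assume "K \<in> {K. K \<subseteq> {..<M} \<and> card K = k}"
  moreover then have "finite K" using finite_subset by blast
  ultimately show "{..<M} - K \<in> {K. K \<subseteq> {..<M} \<and> card K = M - k}"
    by (auto simp: card_Diff_subset)
next
  fix K assume "K \<in> {K. K \<subseteq> {..<M} \<and> card K = M - k}"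
  moreover then have "finite K" using finite_subset by blast
  ultimately show "{..<M} - K \<in> {K. K \<subseteq> {..<M} \<and> card K = k}"
    using assms by (auto simp: card_Diff_subset)
qed (auto intro: arg_cong[where f = f])

lemma map_mat_col_submatrix:
  assumes "K \<subseteq> {..<dim_col A}"
  shows "map_mat f (col_submatrix A K) = col_submatrix (map_mat f A) K"
  using assms pick_less[OF assms]
  by (intro eq_matI) (simp_all add: col_submatrix_eq_mat[OF carrier_matI[OF refl refl]])

lemma map_mat_id [simp]: "map_mat id A = A"
  by (rule eq_matI) simp_all

lemma NE_map_mat: "NE emb k A = NE id k (map_mat emb A)"
  unfolding NE_def by (intro sum.cong) (auto simp: map_mat_col_submatrix)

lemma NE_Naimark_complex:
  fixes \<Phi> \<Psi> :: "complex mat"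
  assumes \<Phi>: "\<Phi> \<in> carrier_mat N M" and \<Psi>: "\<Psi> \<in> carrier_mat r M"
    and \<Psi>_rows: "\<Psi> * mat_adjoint \<Psi> = 1\<^sub>m r"
    and Naimark: "mat_adjoint \<Psi> * \<Psi> = 1\<^sub>m M - mat_adjoint \<Phi> * \<Phi>"
    and k: "k \<le> M"
  shows "NE id (M - k) \<Psi> = NE id k \<Phi> + real (M choose k) * (real r - real k)"
proof -
  define S where "S = {K. K \<subseteq> {..<M} \<and> card K = k}"
  have "NE id (M - k) \<Psi> = (\<Sum>K\<in>S. nuclear_norm (col_submatrix \<Psi> ({..<M} - K)))"
    using \<Psi> k by (simp add: NE_def S_def sum_subsets_complement)
  also have "\<dots> = (\<Sum>K\<in>S. nuclear_norm (col_submatrix \<Phi> K) + (real r - real k))"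
    using nuclear_norm_Naimark_col_submatrix[OF \<Phi> \<Psi> \<Psi>_rows Naimark]
    by (intro sum.cong) (auto simp: S_def algebra_simps)
  also have "\<dots> = NE id k \<Phi> + real (card S) * (real r - real k)"
    using \<Phi> by (simp add: NE_def S_def sum.distrib)
  also have "card S = M choose k"
    using n_subsets[of "{..<M}" k] by (simp add: S_def)
  finally show ?thesis .
qed

lemma NE_Naimark:
  fixes emb :: "'a::conjugatable_field \<Rightarrow> complex"
  assumes hom: "ring_hom emb" and conj: "\<And>a. emb (conjugate a) = cnj (emb a)"
    and \<Phi>: "\<Phi> \<in> carrier_mat N M" and \<Psi>: "\<Psi> \<in> parseval_frames M r"
    and Naimark: "naimark_complements \<Phi> \<Psi>" and k: "k \<le> M"
  shows "NE emb (M - k) \<Psi> = NE emb k \<Phi> + real (M choose k) * (real r - real k)"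
proof -
  interpret ring_hom emb by (fact hom)
  have \<Psi>_carrier: "\<Psi> \<in> carrier_mat r M" and "\<Psi> * mat_adjoint \<Psi> = 1\<^sub>m r"
    using \<Psi> by (auto simp: parseval_frames_def)
  have adj: "mat_adjoint (map_mat emb A) = map_mat emb (mat_adjoint A)" for A
    using conj by (simp add: mat_adjoint_map_mat)
  have "map_mat emb \<Psi> * mat_adjoint (map_mat emb \<Psi>) = 1\<^sub>m r"
    using arg_cong[OF \<open>\<Psi> * mat_adjoint \<Psi> = 1\<^sub>m r\<close>, of "map_mat emb"] \<Psi>_carrier
    by (simp add: adj mat_hom_mult[of _ r M _ r] mat_hom_one)
  moreover have "mat_adjoint (map_mat emb \<Psi>) * map_mat emb \<Psi>
      = 1\<^sub>m M - mat_adjoint (map_mat emb \<Phi>) * map_mat emb \<Phi>"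
  proof -
    have "mat_adjoint \<Psi> * \<Psi> = 1\<^sub>m M - mat_adjoint \<Phi> * \<Phi>"
      using Naimark \<Phi> by (simp add: naimark_complements_def)
    then have "map_mat emb (mat_adjoint \<Psi> * \<Psi>) = map_mat emb (1\<^sub>m M - mat_adjoint \<Phi> * \<Phi>)"
      by simp
    moreover have "map_mat emb (1\<^sub>m M - mat_adjoint \<Phi> * \<Phi>) = 1\<^sub>m M - map_mat emb (mat_adjoint \<Phi> * \<Phi>)"
      using \<Phi> by (intro eq_matI) (auto simp: hom_minus)
    ultimately show ?thesis
      using \<Phi> \<Psi>_carrier by (simp add: adj mat_hom_mult[of _ M r _ M] mat_hom_mult[of _ M N _ M])
  qed
  ultimately show ?thesis
    using NE_Naimark_complex[of "map_mat emb \<Phi>" N M "map_mat emb \<Psi>" r k] \<Phi> \<Psi>_carrier k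
    by (simp add: NE_map_mat[of emb])
qed

section \<open>Existence of Naimark complements\<close>

lemma wide_mat_kernel_nonzero:
  fixes A :: "'a::field mat"
  assumes A: "A \<in> carrier_mat r n" and "r < n"
  obtains v where "v \<in> carrier_vec n" "v \<noteq> 0\<^sub>v n" "A *\<^sub>v v = 0\<^sub>v r"
proof -
  define B where "B = mat\<^sub>r n n (\<lambda>i. if i = n - 1 then 0\<^sub>v n else if i < r then row A i else 0\<^sub>v n)"
  have "det B = 0"
    unfolding B_def using A \<open>r < n\<close> by (intro det_row_0) auto
  then obtain v where v: "v \<in> carrier_vec n" "v \<noteq> 0\<^sub>v n" "B *\<^sub>v v = 0\<^sub>v n"
    using det_0_iff_vec_prod_zero_field[of B n] by (auto simp: B_def)
  have "A *\<^sub>v v = 0\<^sub>v r"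
  proof (rule eq_vecI)
    fix i assume "i < dim_vec (0\<^sub>v r :: 'a vec)"
    then have i: "i < r" by simp
    then have "(B *\<^sub>v v) $ i = 0" using v(3) \<open>r < n\<close> by simp
    moreover have "i \<noteq> n - 1" using i \<open>r < n\<close> by arith
    ultimately show "(A *\<^sub>v v) $ i = 0\<^sub>v r $ i"
      using i A \<open>r < n\<close> by (simp add: B_def)
  qed (use A in simp)
  then show ?thesis using that v(1,2) by blast
qed

definition orthonormal_vecs :: "'a::conjugatable_field vec list \<Rightarrow> bool" where
  "orthonormal_vecs vs \<longleftrightarrow>
     (\<forall>i<length vs. \<forall>j<length vs. vs ! i \<bullet>c vs ! j = (if i = j then 1 else 0))"

lemma orthonormal_vecs_appendD:
  assumes "orthonormal_vecs (vs @ ws)"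
  shows "orthonormal_vecs ws"
  unfolding orthonormal_vecs_def
proof (intro allI impI)
  fix i j assume "i < length ws" "j < length ws"
  then show "ws ! i \<bullet>c ws ! j = (if i = j then 1 else 0)"
    using assms[unfolded orthonormal_vecs_def, rule_format, of "length vs + i" "length vs + j"]
    by (simp add: nth_append)
qed

lemma index_mult_adjoint_mat_of_rows:
  assumes vs: "set vs \<subseteq> carrier_vec n" and i: "i < length vs" and j: "j < length vs"
  shows "(mat_of_rows n vs * mat_adjoint (mat_of_rows n vs)) $$ (i, j) = vs ! i \<bullet>c vs ! j"
proof -
  have "vs ! i \<in> carrier_vec n" "vs ! j \<in> carrier_vec n"
    using vs i j nth_mem by blast+
  moreover have "col (mat_adjoint (mat_of_rows n vs)) j = conjugate (vs ! j)"
    using j \<open>vs ! j \<in> carrier_vec n\<close> by (intro eq_vecI) (simp_all add: mat_of_rows_index)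
  ultimately show ?thesis using i j by simp
qed

lemma mult_adjoint_mat_of_rows_eq_one_iff:
  assumes "set vs \<subseteq> carrier_vec n"
  shows "mat_of_rows n vs * mat_adjoint (mat_of_rows n vs) = 1\<^sub>m (length vs) \<longleftrightarrow> orthonormal_vecs vs"
  using assms by (auto simp: mat_eq_iff orthonormal_vecs_def index_mult_adjoint_mat_of_rows
      simp del: index_mult_mat(1))

lemma index_adjoint_mult_mat_of_rows:
  assumes "set vs \<subseteq> carrier_vec n" "a < n" "b < n"
  shows "(mat_adjoint (mat_of_rows n vs) * mat_of_rows n vs) $$ (a, b) = (\<Sum>v\<leftarrow>vs. conjugate (v $ a) * v $ b)"
  using assms by (simp add: index_mat_adjoint_mult mat_of_rows_index sum_list_sum_nth lessThan_atLeast0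
      del: index_mult_mat(1))

lemma adjoint_mult_mat_of_rows_append:
  assumes "set vs \<subseteq> carrier_vec n" "set ws \<subseteq> carrier_vec n"
  shows "mat_adjoint (mat_of_rows n (vs @ ws)) * mat_of_rows n (vs @ ws)
       = mat_adjoint (mat_of_rows n vs) * mat_of_rows n vs + mat_adjoint (mat_of_rows n ws) * mat_of_rows n ws"
  using assms by (intro eq_matI) (simp_all add: index_adjoint_mult_mat_of_rows del: index_mult_mat(1))

lemma cscalar_prod_swap:
  fixes v w :: "'a::conjugatable_field vec"
  assumes "v \<in> carrier_vec n" "w \<in> carrier_vec n"
  shows "w \<bullet>c v = conjugate (v \<bullet>c w)"
  using assms by (simp add: conjugate_sprod_vec[of _ n] comm_scalar_prod[of _ n])

lemma orthonormal_vecs_extend_one: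
  fixes vs :: "'a::conjugatable_ordered_field vec list"
  assumes normalizable: "\<And>t::'a. 0 < t \<Longrightarrow> \<exists>c. c * conjugate c * t = 1"
    and vs: "set vs \<subseteq> carrier_vec n" and orth: "orthonormal_vecs vs" and "length vs < n"
  obtains w where "w \<in> carrier_vec n" "orthonormal_vecs (vs @ [w])"
proof -
  obtain v where v: "v \<in> carrier_vec n" "v \<noteq> 0\<^sub>v n" "mat_of_rows n vs *\<^sub>v v = 0\<^sub>v (length vs)"
    using wide_mat_kernel_nonzero[OF mat_of_rows_carrier(1) \<open>length vs < n\<close>] by blast
  define u where "u = conjugate v"
  have u: "u \<in> carrier_vec n" "u \<noteq> 0\<^sub>v n" using v by (auto simp: u_def)
  have vs_i: "vs ! i \<in> carrier_vec n" if "i < length vs" for i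
    using vs nth_mem[OF that] by blast
  have perp: "vs ! i \<bullet>c u = 0" if "i < length vs" for i
    using arg_cong[OF v(3), of "\<lambda>x. x $ i"] that vs_i[OF that] by (simp add: u_def)
  obtain c where c: "c * conjugate c * (u \<bullet>c u) = 1"
    using normalizable u conjugate_square_greater_0_vec[OF u(1)] by blast
  define w where "w = c \<cdot>\<^sub>v u"
  have w: "w \<in> carrier_vec n" using u by (simp add: w_def)
  have perp_w: "vs ! i \<bullet>c w = 0" if "i < length vs" for i
    using perp[OF that] vs_i[OF that] u
    by (simp add: w_def conjugate_smult_vec scalar_prod_smult_distrib[of _ n])
  have perp_w': "w \<bullet>c vs ! i = 0" if "i < length vs" for i
    using perp_w[OF that] cscalar_prod_swap[OF vs_i[OF that] w] by simp
  have "w \<bullet>c w = 1"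
    using c u by (simp add: w_def conjugate_smult_vec scalar_prod_smult_distrib[of _ n]
        smult_scalar_prod_distrib[of _ n] ac_simps)
  with orth perp_w perp_w' have "orthonormal_vecs (vs @ [w])"
    by (auto simp: orthonormal_vecs_def nth_append less_Suc_eq)
  with w show ?thesis by (rule that)
qed

lemma orthonormal_vecs_extend:
  fixes vs :: "'a::conjugatable_ordered_field vec list"
  assumes normalizable: "\<And>t::'a. 0 < t \<Longrightarrow> \<exists>c. c * conjugate c * t = 1"
    and "set vs \<subseteq> carrier_vec n" "orthonormal_vecs vs" "length vs \<le> n"
  obtains ws where "set ws \<subseteq> carrier_vec n" "length (vs @ ws) = n" "orthonormal_vecs (vs @ ws)"
proof -
  have "\<exists>ws. set ws \<subseteq> carrier_vec n \<and> length (vs @ ws) = n \<and> orthonormal_vecs (vs @ ws)"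
    using assms(2-4)
  proof (induction "n - length vs" arbitrary: vs)
    case 0
    then show ?case by (intro exI[of _ "[]"]) simp
  next
    case (Suc d)
    have "length vs < n" using Suc.hyps(2) by arith
    then obtain w where w: "w \<in> carrier_vec n" "orthonormal_vecs (vs @ [w])"
      using orthonormal_vecs_extend_one[OF normalizable Suc.prems(1,2)] by blast
    moreover have "d = n - length (vs @ [w])" "set (vs @ [w]) \<subseteq> carrier_vec n" "length (vs @ [w]) \<le> n"
      using Suc.hyps(2) Suc.prems(1) w(1) \<open>length vs < n\<close> by auto
    ultimately obtain ws where
      "set ws \<subseteq> carrier_vec n" "length ((vs @ [w]) @ ws) = n" "orthonormal_vecs ((vs @ [w]) @ ws)"
      using Suc.hyps(1)[of "vs @ [w]"] w(2) by blast
    with w(1) show ?case by (intro exI[of _ "w # ws"]) simp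
  qed
  then show ?thesis using that by blast
qed

lemma Naimark_complement_exists:
  fixes \<Phi> :: "'a::conjugatable_ordered_field mat"
  assumes normalizable: "\<And>t::'a. 0 < t \<Longrightarrow> \<exists>c. c * conjugate c * t = 1"
    and \<Phi>: "\<Phi> \<in> parseval_frames M N" and "N \<le> M"
  obtains \<Psi> where "\<Psi> \<in> parseval_frames M (M - N)" "naimark_complements \<Phi> \<Psi>"
proof -
  define vs where "vs = rows \<Phi>"
  have \<Phi>_carrier: "\<Phi> \<in> carrier_mat N M" and \<Phi>_eq: "\<Phi> = mat_of_rows M vs"
    using \<Phi> by (auto simp: parseval_frames_def vs_def)
  have vs: "set vs \<subseteq> carrier_vec M" "length vs = N"
    using \<Phi>_carrier rows_carrier[of \<Phi>] by (auto simp: vs_def)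
  have "orthonormal_vecs vs"
    using \<Phi> vs mult_adjoint_mat_of_rows_eq_one_iff[OF vs(1)] by (simp add: parseval_frames_def \<Phi>_eq)
  then obtain ws where ws: "set ws \<subseteq> carrier_vec M" "length (vs @ ws) = M" "orthonormal_vecs (vs @ ws)"
    using orthonormal_vecs_extend[OF normalizable vs(1)] vs(2) \<open>N \<le> M\<close> by blast
  define \<Psi> U where "\<Psi> = mat_of_rows M ws" and "U = mat_of_rows M (vs @ ws)"
  have "length ws = M - N" using ws(2) vs(2) by simp
  then have \<Psi>_frame: "\<Psi> \<in> parseval_frames M (M - N)"
    using orthonormal_vecs_appendD[OF ws(3)] mult_adjoint_mat_of_rows_eq_one_iff[OF ws(1)]
      mat_of_rows_carrier(1)[of M ws]
    by (simp add: parseval_frames_def \<Psi>_def)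
  have vs_ws: "set (vs @ ws) \<subseteq> carrier_vec M" using ws(1) vs(1) by simp
  have "U * mat_adjoint U = 1\<^sub>m (length (vs @ ws))"
    unfolding U_def mult_adjoint_mat_of_rows_eq_one_iff[OF vs_ws] by (rule ws(3))
  moreover have U: "U \<in> carrier_mat M M"
    using mat_of_rows_carrier(1)[of M "vs @ ws"] ws(2) unfolding U_def by argo
  ultimately have "mat_adjoint U * U = 1\<^sub>m M"
    using mat_mult_left_right_inverse[OF U mat_adjoint_carrier[OF U]] ws(2) by argo
  then have "mat_adjoint \<Phi> * \<Phi> + mat_adjoint \<Psi> * \<Psi> = 1\<^sub>m M"
    using ws vs by (simp add: U_def \<Psi>_def \<Phi>_eq adjoint_mult_mat_of_rows_append)
  then have "naimark_complements \<Phi> \<Psi>"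
    using \<Phi>_carrier unfolding naimark_complements_def
    by (intro mat_eq_minus_of_add_eq[of _ M M]) (auto simp: \<Psi>_def)
  with \<Psi>_frame show ?thesis by (rule that)
qed

lemma naimark_complements_sym:
  assumes "\<Phi> \<in> carrier_mat N M" "\<Psi> \<in> carrier_mat r M" "naimark_complements \<Phi> \<Psi>"
  shows "naimark_complements \<Psi> \<Phi>"
proof -
  have "mat_adjoint \<Phi> * \<Phi> \<in> carrier_mat M M" using assms(1) by auto
  then have "mat_adjoint \<Phi> * \<Phi> = 1\<^sub>m M - (1\<^sub>m M - mat_adjoint \<Phi> * \<Phi>)"
    by (intro eq_matI) simp_all
  then show ?thesis using assms by (simp add: naimark_complements_def)
qed

lemma real_normalizable: "0 < t \<Longrightarrow> \<exists>c::real. c * conjugate c * t = 1"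
  by (intro exI[of _ "1 / sqrt t"]) (simp add: field_simps)

lemma complex_normalizable: "0 < t \<Longrightarrow> \<exists>c::complex. c * conjugate c * t = 1"
proof -
  assume "0 < t"
  then have t: "t = of_real (Re t)" and "0 < Re t"
    by (auto simp: less_complex_def complex_eq_iff)
  then obtain s where "s * conjugate s * Re t = 1"
    using real_normalizable by blast
  then have "of_real s * conjugate (of_real s) * t = 1"
    by (subst t) (simp flip: of_real_mult)
  then show ?thesis by blast
qed

section \<open>Maximizers of NE under the Naimark correspondence\<close>

lemma max_iff_of_related_shift:
  fixes f :: "'a \<Rightarrow> real" and g :: "'b \<Rightarrow> real"
  assumes shift: "\<And>x y. x \<in> X \<Longrightarrow> y \<in> Y \<Longrightarrow> R x y \<Longrightarrow> g y = f x + c"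
    and left: "\<And>x. x \<in> X \<Longrightarrow> \<exists>y\<in>Y. R x y" and right: "\<And>y. y \<in> Y \<Longrightarrow> \<exists>x\<in>X. R x y"
    and related: "x\<^sub>0 \<in> X" "y\<^sub>0 \<in> Y" "R x\<^sub>0 y\<^sub>0"
  shows "(\<forall>x\<in>X. f x \<le> f x\<^sub>0) \<longleftrightarrow> (\<forall>y\<in>Y. g y \<le> g y\<^sub>0)"
proof -
  have g0: "g y\<^sub>0 = f x\<^sub>0 + c" using shift related .
  show ?thesis
  proof
    assume max: "\<forall>x\<in>X. f x \<le> f x\<^sub>0"
    show "\<forall>y\<in>Y. g y \<le> g y\<^sub>0"
    proof
      fix y assume "y \<in> Y"
      with right obtain x where "x \<in> X" "R x y" by blast
      then have "g y = f x + c" using shift \<open>y \<in> Y\<close> by blast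
      with max \<open>x \<in> X\<close> g0 show "g y \<le> g y\<^sub>0" by simp
    qed
  next
    assume max: "\<forall>y\<in>Y. g y \<le> g y\<^sub>0"
    show "\<forall>x\<in>X. f x \<le> f x\<^sub>0"
    proof
      fix x assume "x \<in> X"
      with left obtain y where "y \<in> Y" "R x y" by blast
      then have "g y = f x + c" using shift \<open>x \<in> X\<close> by blast
      with max \<open>y \<in> Y\<close> g0 show "f x \<le> f x\<^sub>0" by force
    qed
  qed
qed

lemma maximizes_NE_Naimark_iff:
  fixes emb :: "'a::conjugatable_ordered_field \<Rightarrow> complex"
  assumes hom: "ring_hom emb" and conj: "\<And>a. emb (conjugate a) = cnj (emb a)"
    and normalizable: "\<And>t::'a. 0 < t \<Longrightarrow> \<exists>c. c * conjugate c * t = 1"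
    and "N \<le> M" "k \<le> M"
    and \<Phi>: "\<Phi> \<in> parseval_frames M N" and \<Psi>: "\<Psi> \<in> parseval_frames M (M - N)"
    and Naimark: "naimark_complements \<Phi> \<Psi>"
  shows "maximizes_NE emb k M N \<Phi> \<longleftrightarrow> maximizes_NE emb (M - k) M (M - N) \<Psi>"
proof -
  have carrier: "A \<in> parseval_frames M n \<Longrightarrow> A \<in> carrier_mat n M" for A :: "'a mat" and n
    by (simp add: parseval_frames_def)
  have "(\<forall>\<Phi>'\<in>parseval_frames M N. NE emb k \<Phi>' \<le> NE emb k \<Phi>)
    \<longleftrightarrow> (\<forall>\<Psi>'\<in>parseval_frames M (M - N). NE emb (M - k) \<Psi>' \<le> NE emb (M - k) \<Psi>)"
  proof (rule max_iff_of_related_shift[where R = naimark_complements])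
    fix \<Phi>' \<Psi>' :: "'a mat" assume "\<Phi>' \<in> parseval_frames M N" "\<Psi>' \<in> parseval_frames M (M - N)"
      "naimark_complements \<Phi>' \<Psi>'"
    then show "NE emb (M - k) \<Psi>' = NE emb k \<Phi>' + real (M choose k) * (real (M - N) - real k)"
      using NE_Naimark[OF hom conj carrier] \<open>k \<le> M\<close> by simp
  next
    fix \<Phi>' :: "'a mat" assume "\<Phi>' \<in> parseval_frames M N"
    then obtain \<Psi>' where "\<Psi>' \<in> parseval_frames M (M - N)" "naimark_complements \<Phi>' \<Psi>'"
      using Naimark_complement_exists[OF normalizable _ \<open>N \<le> M\<close>] by blast
    then show "\<exists>\<Psi>'\<in>parseval_frames M (M - N). naimark_complements \<Phi>' \<Psi>'" by blast
  next
    fix \<Psi>' :: "'a mat" assume \<Psi>': "\<Psi>' \<in> parseval_frames M (M - N)"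
    obtain \<Phi>' where "\<Phi>' \<in> parseval_frames M (M - (M - N))" "naimark_complements \<Psi>' \<Phi>'"
      using Naimark_complement_exists[OF normalizable \<Psi>' diff_le_self] by blast
    moreover have "M - (M - N) = N" using \<open>N \<le> M\<close> by simp
    ultimately have "\<Phi>' \<in> parseval_frames M N" "naimark_complements \<Phi>' \<Psi>'"
      using naimark_complements_sym[OF carrier[OF \<Psi>'] carrier] by auto
    then show "\<exists>\<Phi>'\<in>parseval_frames M N. naimark_complements \<Phi>' \<Psi>'" by blast
  qed (use \<Phi> \<Psi> Naimark in auto)
  then show ?thesis
    using \<Phi> \<Psi> by (simp add: maximizes_NE_def)
qed

theorem proposition16:
  shows "(\<forall>(M::nat) (N::nat) (k::nat) (\<Phi>::real mat) (\<Psi>::real mat).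
            M > N \<longrightarrow> k \<le> M \<longrightarrow> \<Phi> \<in> parseval_frames M N \<longrightarrow>
            \<Psi> \<in> parseval_frames M (M - N) \<longrightarrow> naimark_complements \<Phi> \<Psi> \<longrightarrow>
            (maximizes_NE complex_of_real k M N \<Phi> \<longleftrightarrow>
             maximizes_NE complex_of_real (M - k) M (M - N) \<Psi>))
       \<and> (\<forall>(M::nat) (N::nat) (k::nat) (\<Phi>::complex mat) (\<Psi>::complex mat).
            M > N \<longrightarrow> k \<le> M \<longrightarrow> \<Phi> \<in> parseval_frames M N \<longrightarrow>
            \<Psi> \<in> parseval_frames M (M - N) \<longrightarrow> naimark_complements \<Phi> \<Psi> \<longrightarrow>
            (maximizes_NE id k M N \<Phi> \<longleftrightarrow> maximizes_NE id (M - k) M (M - N) \<Psi>))"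
proof (intro conjI allI impI)
  fix M N k :: nat and \<Phi> \<Psi> :: "real mat"
  assume "N < M" "k \<le> M" "\<Phi> \<in> parseval_frames M N" "\<Psi> \<in> parseval_frames M (M - N)"
    "naimark_complements \<Phi> \<Psi>"
  then show "maximizes_NE complex_of_real k M N \<Phi> \<longleftrightarrow>
      maximizes_NE complex_of_real (M - k) M (M - N) \<Psi>"
    by (intro maximizes_NE_Naimark_iff[OF of_real_hom.ring_hom_axioms _ real_normalizable]) auto
next
  fix M N k :: nat and \<Phi> \<Psi> :: "complex mat"
  assume "N < M" "k \<le> M" "\<Phi> \<in> parseval_frames M N" "\<Psi> \<in> parseval_frames M (M - N)"
    "naimark_complements \<Phi> \<Psi>"
  moreover have "ring_hom (id :: complex \<Rightarrow> complex)"
    by unfold_locales simp_all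
  ultimately show "maximizes_NE id k M N \<Phi> \<longleftrightarrow> maximizes_NE id (M - k) M (M - N) \<Psi>"
    by (intro maximizes_NE_Naimark_iff[OF _ _ complex_normalizable]) auto
qed

end
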